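(* Let $n>0$ and $J\subseteq S$. The restriction of the weak order $\leq_S$ to the set $\mathfrak{S}_n^J(231)$ is a lattice, denoted $\mathcal{T}_n^J$. Although $\mathcal{T}_n^J$ is in general not a sublattice of $\mathrm{Weak}(\mathfrak{S}_n^J)$, it is a lattice quotient of $\mathrm{Weak}(\mathfrak{S}_n^J)$, i.e. there is a lattice congruence $\Theta$ on $\mathrm{Weak}(\mathfrak{S}_n^J)$ such that the quotient lattice $\mathrm{Weak}(\mathfrak{S}_n^J)/\Theta$ is isomorphic to $\mathcal{T}_n^J$.
   Context: Let $\mathfrak{S}_n$ be the symmetric group on $[n]=\{1,\dots,n\}$, $s_i=(i,i+1)$ for $i\in[n-1]$, and $S=\{s_1,\dots,s_{n-1}\}$. Write permutations in one-line notation $w=w_1w_2\cdots w_n$ with $w_i=w(i)$. The inversion set is $\mathrm{inv}(w)=\{(i,j):1\le i<j\le n,\ w_i>w_j\}$ and the (left) weak order is $u\le_S v$ iff $\mathrm{inv}(u)\subseteq\mathrm{inv}(v)$. For $J\subseteq S$, the parabolic quotient is $\mathfrak{S}_n^J=\{w\in\mathfrak{S}_n : w<_S ws\text{ for all }s\in J\}$ (concretely: $w_i<w_{i+1}$ whenever $s_i\in J$); $\mathrm{Weak}(\mathfrak{S}_n^J)$ is $\mathfrak{S}_n^J$ with the restricted order, which is a lattice (it is the weak order interval $[e,w_\circ^J]$). Writing $J=S\setminus\{s_{j_1},\dots,s_{j_r}\}$ with $j_1<\dots<j_r$, the $J$-regions are the blocks $\{1,\dots,j_1\},\{j_1+1,\dots,j_2\},\dots,\{j_r+1,\dots,n\}$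 of $[n]$. An element $w\in\mathfrak{S}_n^J$ contains a $(J,231)$-pattern if there are indices $i<j<k$, lying in three pairwise different $J$-regions, with $w_k<w_i<w_j$ and $w_i=w_k+1$; otherwise $w$ is $(J,231)$-avoiding, and $\mathfrak{S}_n^J(231)$ denotes the set of $(J,231)$-avoiding elements of $\mathfrak{S}_n^J$. A lattice congruence on a lattice $L$ is an equivalence relation $\Theta$ such that $x\,\Theta\, y$ implies $(x\wedge z)\,\Theta\,(y\wedge z)$ and $(x\vee z)\,\Theta\,(y\vee z)$ for all $z$; the quotient $L/\Theta$ carries the induced lattice operations. *)

theory Defs
  imports Main "HOL-Combinatorics.Permutations"
begin

text \<open>Permutations of [n] are functions nat => nat that permute {1..n}.
  The simple reflection s_i is identified with the index i, so J is a subset of {1..<n}.\<close>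

definition perms :: "nat \<Rightarrow> (nat \<Rightarrow> nat) set" where
  "perms n = {w. w permutes {1..n}}"

definition inv_set :: "nat \<Rightarrow> (nat \<Rightarrow> nat) \<Rightarrow> (nat \<times> nat) set" where
  "inv_set n w = {(i, j). 1 \<le> i \<and> i < j \<and> j \<le> n \<and> w i > w j}"

definition weak_le :: "nat \<Rightarrow> (nat \<Rightarrow> nat) \<Rightarrow> (nat \<Rightarrow> nat) \<Rightarrow> bool" where
  "weak_le n u v \<longleftrightarrow> inv_set n u \<subseteq> inv_set n v"

definition parabolic :: "nat \<Rightarrow> nat set \<Rightarrow> (nat \<Rightarrow> nat) set" where
  "parabolic n J = {w \<in> perms n. \<forall>i\<in>J. w i < w (Suc i)}"

text \<open>Positions i and j lie in the same J-region iff no s_k with min i j <= k < max i j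
  is missing from J (the J-regions are the maximal blocks cut at the s_k not in J).\<close>
definition same_J_region :: "nat set \<Rightarrow> nat \<Rightarrow> nat \<Rightarrow> bool" where
  "same_J_region J i j \<longleftrightarrow> (\<forall>k. min i j \<le> k \<and> k < max i j \<longrightarrow> k \<in> J)"

definition has_J231 :: "nat \<Rightarrow> nat set \<Rightarrow> (nat \<Rightarrow> nat) \<Rightarrow> bool" where
  "has_J231 n J w \<longleftrightarrow> (\<exists>i j k. 1 \<le> i \<and> i < j \<and> j < k \<and> k \<le> n
      \<and> \<not> same_J_region J i j \<and> \<not> same_J_region J j k \<and> \<not> same_J_region J i k
      \<and> w k < w i \<and> w i < w j \<and> w i = w k + 1)"

definition avoid231 :: "nat \<Rightarrow> nat set \<Rightarrow> (nat \<Rightarrow> nat) set" where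
  "avoid231 n J = {w \<in> parabolic n J. \<not> has_J231 n J w}"

definition is_join :: "'a set \<Rightarrow> ('a \<Rightarrow> 'a \<Rightarrow> bool) \<Rightarrow> 'a \<Rightarrow> 'a \<Rightarrow> 'a \<Rightarrow> bool" where
  "is_join A le x y z \<longleftrightarrow> z \<in> A \<and> le x z \<and> le y z \<and> (\<forall>u\<in>A. le x u \<and> le y u \<longrightarrow> le z u)"

definition is_meet :: "'a set \<Rightarrow> ('a \<Rightarrow> 'a \<Rightarrow> bool) \<Rightarrow> 'a \<Rightarrow> 'a \<Rightarrow> 'a \<Rightarrow> bool" where
  "is_meet A le x y z \<longleftrightarrow> z \<in> A \<and> le z x \<and> le z y \<and> (\<forall>u\<in>A. le u x \<and> le u y \<longrightarrow> le u z)"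

definition is_lattice_on :: "'a set \<Rightarrow> ('a \<Rightarrow> 'a \<Rightarrow> bool) \<Rightarrow> bool" where
  "is_lattice_on A le \<longleftrightarrow>
     (\<forall>x\<in>A. le x x) \<and>
     (\<forall>x\<in>A. \<forall>y\<in>A. le x y \<and> le y x \<longrightarrow> x = y) \<and>
     (\<forall>x\<in>A. \<forall>y\<in>A. \<forall>z\<in>A. le x y \<and> le y z \<longrightarrow> le x z) \<and>
     (\<forall>x\<in>A. \<forall>y\<in>A. (\<exists>z. is_join A le x y z) \<and> (\<exists>z. is_meet A le x y z))"

definition join_on :: "'a set \<Rightarrow> ('a \<Rightarrow> 'a \<Rightarrow> bool) \<Rightarrow> 'a \<Rightarrow> 'a \<Rightarrow> 'a" where
  "join_on A le x y = (THE z. is_join A le x y z)"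

definition meet_on :: "'a set \<Rightarrow> ('a \<Rightarrow> 'a \<Rightarrow> bool) \<Rightarrow> 'a \<Rightarrow> 'a \<Rightarrow> 'a" where
  "meet_on A le x y = (THE z. is_meet A le x y z)"

definition lattice_congruence :: "'a set \<Rightarrow> ('a \<Rightarrow> 'a \<Rightarrow> bool) \<Rightarrow> ('a \<times> 'a) set \<Rightarrow> bool" where
  "lattice_congruence A le \<Theta> \<longleftrightarrow> equiv A \<Theta> \<and>
     (\<forall>x\<in>A. \<forall>y\<in>A. \<forall>z\<in>A. (x, y) \<in> \<Theta> \<longrightarrow>
        (meet_on A le x z, meet_on A le y z) \<in> \<Theta> \<and> (join_on A le x z, join_on A le y z) \<in> \<Theta>)"

text \<open>The quotient lattice A//Theta has the induced operations [x] v [y] = [x v y],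
  [x] ^ [y] = [x ^ y]; it is isomorphic to the lattice (B, leB) iff there is a
  bijection A//Theta -> B carrying the induced operations to the joins/meets of B.\<close>
definition quotient_iso :: "'a set \<Rightarrow> ('a \<Rightarrow> 'a \<Rightarrow> bool) \<Rightarrow> ('a \<times> 'a) set
    \<Rightarrow> 'b set \<Rightarrow> ('b \<Rightarrow> 'b \<Rightarrow> bool) \<Rightarrow> bool" where
  "quotient_iso A le \<Theta> B leB \<longleftrightarrow> (\<exists>f. bij_betw f (A // \<Theta>) B \<and>
     (\<forall>x\<in>A. \<forall>y\<in>A.
        f (\<Theta> `` {join_on A le x y}) = join_on B leB (f (\<Theta> `` {x})) (f (\<Theta> `` {y})) \<and>
        f (\<Theta> `` {meet_on A le x y}) = meet_on B leB (f (\<Theta> `` {x})) (f (\<Theta> `` {y}))))"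

end

theory Submission
  imports Defs
begin

(* The weak order on permutations is modelled by inversion sets: the permutations of [n]
   correspond to the biclosed (transitive and cotransitive) sets of pairs, and the join of x
   and y has as inversion set the transitive closure of inv(x) \<union> inv(y).  Call an inversion
   (i, k) of w guarded if every position j between i and k in a third J-region has
   w j < w i.  The map pi_down, which keeps the transitive closure of the guarded inversions,
   is deflationary, monotone and idempotent and satisfies pi_down (x \<squnion> z) \<le> pi_down x \<squnion> z.
   For any such operator on a lattice, the fixed points form a lattice and the kernel is a
   lattice congruence whose quotient is isomorphic to them.  Finally pi_down fixes exactly
   the (J,231)-avoiding elements: an unguarded inversion (i, k) that does not split through
   an intermediate value yields a (J,231)-pattern with adjacent values w q = w p + 1, q \<le> i,
   k \<le> p. *)

section \<open>Lattice quotients induced by a projection\<close>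

lemma join_on_eqI:
  assumes "\<And>x y. x \<in> A \<Longrightarrow> y \<in> A \<Longrightarrow> le x y \<Longrightarrow> le y x \<Longrightarrow> x = y"
    and "is_join A le x y z"
  shows "join_on A le x y = z"
  unfolding join_on_def
  by (rule the_equality) (use assms in \<open>auto simp: is_join_def\<close>)

lemma meet_on_eqI:
  assumes "\<And>x y. x \<in> A \<Longrightarrow> y \<in> A \<Longrightarrow> le x y \<Longrightarrow> le y x \<Longrightarrow> x = y"
    and "is_meet A le x y z"
  shows "meet_on A le x y = z"
  unfolding meet_on_def
  by (rule the_equality) (use assms in \<open>auto simp: is_meet_def\<close>)

locale lattice_on =
  fixes A :: "'a set" and le :: "'a \<Rightarrow> 'a \<Rightarrow> bool"
  assumes lattice: "is_lattice_on A le"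
begin

lemma ord_refl: "x \<in> A \<Longrightarrow> le x x"
  using lattice unfolding is_lattice_on_def by blast

lemma ord_antisym: "x \<in> A \<Longrightarrow> y \<in> A \<Longrightarrow> le x y \<Longrightarrow> le y x \<Longrightarrow> x = y"
  using lattice unfolding is_lattice_on_def by blast

lemma ord_trans: "x \<in> A \<Longrightarrow> y \<in> A \<Longrightarrow> z \<in> A \<Longrightarrow> le x y \<Longrightarrow> le y z \<Longrightarrow> le x z"
  using lattice unfolding is_lattice_on_def by blast

lemma is_join_join_on:
  assumes "x \<in> A" "y \<in> A"
  shows "is_join A le x y (join_on A le x y)"
proof -
  obtain z where "is_join A le x y z"
    using lattice assms unfolding is_lattice_on_def by blast
  then show ?thesis using join_on_eqI[OF ord_antisym] by simp
qed

lemma is_meet_meet_on: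
  assumes "x \<in> A" "y \<in> A"
  shows "is_meet A le x y (meet_on A le x y)"
proof -
  obtain z where "is_meet A le x y z"
    using lattice assms unfolding is_lattice_on_def by blast
  then show ?thesis using meet_on_eqI[OF ord_antisym] by simp
qed

abbreviation join (infixl "\<squnion>\<^sub>A" 65) where "x \<squnion>\<^sub>A y \<equiv> join_on A le x y"
abbreviation meet (infixl "\<sqinter>\<^sub>A" 70) where "x \<sqinter>\<^sub>A y \<equiv> meet_on A le x y"

lemma join_closed: "x \<in> A \<Longrightarrow> y \<in> A \<Longrightarrow> x \<squnion>\<^sub>A y \<in> A"
  and join_upper1: "x \<in> A \<Longrightarrow> y \<in> A \<Longrightarrow> le x (x \<squnion>\<^sub>A y)"
  and join_upper2: "x \<in> A \<Longrightarrow> y \<in> A \<Longrightarrow> le y (x \<squnion>\<^sub>A y)"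
  and join_least: "x \<in> A \<Longrightarrow> y \<in> A \<Longrightarrow> u \<in> A \<Longrightarrow> le x u \<Longrightarrow> le y u \<Longrightarrow> le (x \<squnion>\<^sub>A y) u"
  using is_join_join_on[of x y] unfolding is_join_def by blast+

lemma meet_closed: "x \<in> A \<Longrightarrow> y \<in> A \<Longrightarrow> x \<sqinter>\<^sub>A y \<in> A"
  and meet_lower1: "x \<in> A \<Longrightarrow> y \<in> A \<Longrightarrow> le (x \<sqinter>\<^sub>A y) x"
  and meet_lower2: "x \<in> A \<Longrightarrow> y \<in> A \<Longrightarrow> le (x \<sqinter>\<^sub>A y) y"
  and meet_greatest: "x \<in> A \<Longrightarrow> y \<in> A \<Longrightarrow> u \<in> A \<Longrightarrow> le u x \<Longrightarrow> le u y \<Longrightarrow> le u (x \<sqinter>\<^sub>A y)"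
  using is_meet_meet_on[of x y] unfolding is_meet_def by blast+

lemma join_commute: "x \<in> A \<Longrightarrow> y \<in> A \<Longrightarrow> x \<squnion>\<^sub>A y = y \<squnion>\<^sub>A x"
  by (rule ord_antisym) (simp_all add: join_closed join_least join_upper1 join_upper2)

lemma meet_commute: "x \<in> A \<Longrightarrow> y \<in> A \<Longrightarrow> x \<sqinter>\<^sub>A y = y \<sqinter>\<^sub>A x"
  by (rule ord_antisym) (simp_all add: meet_closed meet_greatest meet_lower1 meet_lower2)

end

locale lattice_projection = lattice_on +
  fixes p :: "'a \<Rightarrow> 'a"
  assumes proj_closed: "x \<in> A \<Longrightarrow> p x \<in> A"
    and proj_le: "x \<in> A \<Longrightarrow> le (p x) x"
    and proj_mono: "x \<in> A \<Longrightarrow> y \<in> A \<Longrightarrow> le x y \<Longrightarrow> le (p x) (p y)"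
    and proj_idem: "x \<in> A \<Longrightarrow> p (p x) = p x"
    and proj_join_le: "x \<in> A \<Longrightarrow> z \<in> A \<Longrightarrow> le (p (x \<squnion>\<^sub>A z)) (p x \<squnion>\<^sub>A z)"
begin

lemma proj_le_proj: "x \<in> A \<Longrightarrow> y \<in> A \<Longrightarrow> le (p x) y \<Longrightarrow> le (p x) (p y)"
  by (metis proj_closed proj_idem proj_mono)

lemma proj_join_absorb:
  assumes x: "x \<in> A" and z: "z \<in> A"
  shows "p (x \<squnion>\<^sub>A z) = p (p x \<squnion>\<^sub>A z)"
proof (rule ord_antisym)
  have px: "p x \<in> A" and xz: "x \<squnion>\<^sub>A z \<in> A" and pxz: "p x \<squnion>\<^sub>A z \<in> A"
    using x z by (simp_all add: proj_closed join_closed)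
  show "le (p (x \<squnion>\<^sub>A z)) (p (p x \<squnion>\<^sub>A z))"
    using proj_le_proj[OF xz pxz proj_join_le[OF x z]] .
  have "le (p x) (x \<squnion>\<^sub>A z)"
    using ord_trans[OF px x xz proj_le[OF x] join_upper1[OF x z]] .
  then have "le (p x \<squnion>\<^sub>A z) (x \<squnion>\<^sub>A z)"
    using join_least[OF px z xz] join_upper2[OF x z] by simp
  then show "le (p (p x \<squnion>\<^sub>A z)) (p (x \<squnion>\<^sub>A z))"
    using proj_mono[OF pxz xz] by simp
qed (use x z in \<open>simp_all add: proj_closed join_closed\<close>)

lemma proj_meet_absorb:
  assumes x: "x \<in> A" and z: "z \<in> A"
  shows "p (x \<sqinter>\<^sub>A z) = p (p x \<sqinter>\<^sub>A z)"
proof (rule ord_antisym)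
  have px: "p x \<in> A" and xz: "x \<sqinter>\<^sub>A z \<in> A" and pxz: "p x \<sqinter>\<^sub>A z \<in> A"
    and pxz': "p (x \<sqinter>\<^sub>A z) \<in> A"
    using x z by (simp_all add: proj_closed meet_closed)
  have "le (p (x \<sqinter>\<^sub>A z)) (p x)"
    using proj_mono[OF xz x meet_lower1[OF x z]] .
  moreover have "le (p (x \<sqinter>\<^sub>A z)) z"
    using ord_trans[OF pxz' xz z proj_le[OF xz] meet_lower2[OF x z]] .
  ultimately have "le (p (x \<sqinter>\<^sub>A z)) (p x \<sqinter>\<^sub>A z)"
    using meet_greatest[OF px z pxz'] by simp
  then show "le (p (x \<sqinter>\<^sub>A z)) (p (p x \<sqinter>\<^sub>A z))"
    using proj_le_proj[OF xz pxz] by simp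
  have "le (p x \<sqinter>\<^sub>A z) x"
    using ord_trans[OF pxz px x meet_lower1[OF px z] proj_le[OF x]] .
  then have "le (p x \<sqinter>\<^sub>A z) (x \<sqinter>\<^sub>A z)"
    using meet_greatest[OF x z pxz] meet_lower2[OF px z] by simp
  then show "le (p (p x \<sqinter>\<^sub>A z)) (p (x \<sqinter>\<^sub>A z))"
    using proj_mono[OF pxz xz] by simp
qed (use x z in \<open>simp_all add: proj_closed meet_closed\<close>)

lemma proj_join: "x \<in> A \<Longrightarrow> y \<in> A \<Longrightarrow> p (x \<squnion>\<^sub>A y) = p (p x \<squnion>\<^sub>A p y)"
  by (metis join_commute proj_closed proj_join_absorb)

lemma proj_meet: "x \<in> A \<Longrightarrow> y \<in> A \<Longrightarrow> p (x \<sqinter>\<^sub>A y) = p (p x \<sqinter>\<^sub>A p y)"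
  by (metis meet_commute proj_closed proj_meet_absorb)

definition fixed_points :: "'a set" where
  "fixed_points = {x \<in> A. p x = x}"

definition proj_kernel :: "('a \<times> 'a) set" where
  "proj_kernel = {(x, y). x \<in> A \<and> y \<in> A \<and> p x = p y}"

lemma proj_in_fixed_points: "x \<in> A \<Longrightarrow> p x \<in> fixed_points"
  by (simp add: fixed_points_def proj_closed proj_idem)

lemma is_join_fixed_points:
  assumes x: "x \<in> A" and y: "y \<in> A"
  shows "is_join fixed_points le (p x) (p y) (p (x \<squnion>\<^sub>A y))"
  unfolding is_join_def
proof (intro conjI ballI impI)
  show "p (x \<squnion>\<^sub>A y) \<in> fixed_points"
    using x y by (simp add: proj_in_fixed_points join_closed)
  show "le (p x) (p (x \<squnion>\<^sub>A y))" "le (p y) (p (x \<squnion>\<^sub>A y))"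
    using x y by (simp_all add: proj_mono join_closed join_upper1 join_upper2)
  fix u assume u: "u \<in> fixed_points" "le (p x) u \<and> le (p y) u"
  then have "u \<in> A" "p u = u" by (simp_all add: fixed_points_def)
  with u x y have "le (p (p x \<squnion>\<^sub>A p y)) u"
    by (metis join_closed join_least proj_closed proj_mono)
  then show "le (p (x \<squnion>\<^sub>A y)) u"
    using proj_join[OF x y] by simp
qed

lemma is_meet_fixed_points:
  assumes x: "x \<in> A" and y: "y \<in> A"
  shows "is_meet fixed_points le (p x) (p y) (p (x \<sqinter>\<^sub>A y))"
  unfolding is_meet_def
proof (intro conjI ballI impI)
  show "p (x \<sqinter>\<^sub>A y) \<in> fixed_points"
    using x y by (simp add: proj_in_fixed_points meet_closed)
  show "le (p (x \<sqinter>\<^sub>A y)) (p x)" "le (p (x \<sqinter>\<^sub>A y)) (p y)"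
    using x y by (simp_all add: proj_mono meet_closed meet_lower1 meet_lower2)
  fix u assume u: "u \<in> fixed_points" "le u (p x) \<and> le u (p y)"
  then have "u \<in> A" "p u = u" by (simp_all add: fixed_points_def)
  with u x y have "le u (p (p x \<sqinter>\<^sub>A p y))"
    by (metis meet_closed meet_greatest proj_closed proj_mono)
  then show "le u (p (x \<sqinter>\<^sub>A y))"
    using proj_meet[OF x y] by simp
qed

lemma fixed_points_antisym:
  "x \<in> fixed_points \<Longrightarrow> y \<in> fixed_points \<Longrightarrow> le x y \<Longrightarrow> le y x \<Longrightarrow> x = y"
  by (simp add: fixed_points_def ord_antisym)

lemma lattice_fixed_points: "is_lattice_on fixed_points le"
  unfolding is_lattice_on_def
proof (intro conjI ballI impI)
  fix x y z assume "x \<in> fixed_points" "y \<in> fixed_points" "z \<in> fixed_points"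
  then have xyz: "x \<in> A" "y \<in> A" "z \<in> A" and fixed: "p x = x" "p y = y"
    by (simp_all add: fixed_points_def)
  show "le x x" using ord_refl[OF xyz(1)] .
  show "le x y \<and> le y x \<Longrightarrow> x = y" using ord_antisym[OF xyz(1,2)] by blast
  show "le x y \<and> le y z \<Longrightarrow> le x z" using ord_trans[OF xyz] by blast
  show "\<exists>z. is_join fixed_points le x y z" using is_join_fixed_points[OF xyz(1,2)] fixed by auto
  show "\<exists>z. is_meet fixed_points le x y z" using is_meet_fixed_points[OF xyz(1,2)] fixed by auto
qed

lemma lattice_congruence_proj_kernel: "lattice_congruence A le proj_kernel"
  unfolding lattice_congruence_def
proof (intro conjI ballI impI)
  show "equiv A proj_kernel"
    by (auto simp: equiv_def refl_on_def sym_def trans_def proj_kernel_def)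
  fix x y z assume xyz: "x \<in> A" "y \<in> A" "z \<in> A" and "(x, y) \<in> proj_kernel"
  then have "p x = p y" by (simp add: proj_kernel_def)
  then show "(x \<sqinter>\<^sub>A z, y \<sqinter>\<^sub>A z) \<in> proj_kernel" "(x \<squnion>\<^sub>A z, y \<squnion>\<^sub>A z) \<in> proj_kernel"
    using xyz proj_meet_absorb proj_join_absorb
    by (simp_all add: proj_kernel_def meet_closed join_closed)
qed

lemma proj_kernel_Image: "x \<in> A \<Longrightarrow> proj_kernel `` {x} = {y \<in> A. p y = p x}"
  by (auto simp: proj_kernel_def)

lemma the_elem_proj_kernel_Image: "x \<in> A \<Longrightarrow> the_elem (p ` (proj_kernel `` {x})) = p x"
  by (auto simp: proj_kernel_def intro!: the_elem_image_unique)

lemma quotient_iso_proj_kernel: "quotient_iso A le proj_kernel fixed_points le"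
  unfolding quotient_iso_def
proof (intro exI conjI ballI)
  let ?f = "\<lambda>C. the_elem (p ` C)"
  show "bij_betw ?f (A // proj_kernel) fixed_points"
  proof (rule bij_betw_imageI)
    show "inj_on ?f (A // proj_kernel)"
    proof (rule inj_onI)
      fix C D assume "C \<in> A // proj_kernel" "D \<in> A // proj_kernel" "?f C = ?f D"
      then obtain x y where "x \<in> A" "y \<in> A" "C = proj_kernel `` {x}" "D = proj_kernel `` {y}"
        "p x = p y"
        by (auto elim!: quotientE simp: the_elem_proj_kernel_Image)
      then show "C = D" by (simp add: proj_kernel_Image)
    qed
    show "?f ` (A // proj_kernel) = fixed_points"
    proof
      show "?f ` (A // proj_kernel) \<subseteq> fixed_points"
        by (auto elim!: quotientE simp: the_elem_proj_kernel_Image proj_in_fixed_points)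
      show "fixed_points \<subseteq> ?f ` (A // proj_kernel)"
      proof
        fix x assume "x \<in> fixed_points"
        then have "x \<in> A" "?f (proj_kernel `` {x}) = x"
          by (simp_all add: fixed_points_def the_elem_proj_kernel_Image)
        then show "x \<in> ?f ` (A // proj_kernel)" by (metis imageI quotientI)
      qed
    qed
  qed
  fix x y assume xy: "x \<in> A" "y \<in> A"
  show "?f (proj_kernel `` {x \<squnion>\<^sub>A y}) =
      join_on fixed_points le (?f (proj_kernel `` {x})) (?f (proj_kernel `` {y}))"
    using join_on_eqI[OF fixed_points_antisym is_join_fixed_points[OF xy]] xy
    by (simp add: the_elem_proj_kernel_Image join_closed)
  show "?f (proj_kernel `` {x \<sqinter>\<^sub>A y}) =
      meet_on fixed_points le (?f (proj_kernel `` {x})) (?f (proj_kernel `` {y}))"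
    using meet_on_eqI[OF fixed_points_antisym is_meet_fixed_points[OF xy]] xy
    by (simp add: the_elem_proj_kernel_Image meet_closed)
qed

end

section \<open>Inversion sets\<close>

definition upper_pairs :: "nat \<Rightarrow> (nat \<times> nat) set" where
  "upper_pairs n = {(i, j). 1 \<le> i \<and> i < j \<and> j \<le> n}"

definition cotrans :: "(nat \<times> nat) set \<Rightarrow> bool" where
  "cotrans T \<longleftrightarrow> (\<forall>i j k. (i, k) \<in> T \<longrightarrow> i < j \<longrightarrow> j < k \<longrightarrow> (i, j) \<in> T \<or> (j, k) \<in> T)"

definition biclosed :: "nat \<Rightarrow> (nat \<times> nat) set \<Rightarrow> bool" where
  "biclosed n T \<longleftrightarrow> T \<subseteq> upper_pairs n \<and> trans T \<and> cotrans T"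

lemma cotransD: "cotrans T \<Longrightarrow> (i, k) \<in> T \<Longrightarrow> i < j \<Longrightarrow> j < k \<Longrightarrow> (i, j) \<in> T \<or> (j, k) \<in> T"
  unfolding cotrans_def by blast

lemma trancl_subset_of_trans: "R \<subseteq> T \<Longrightarrow> trans T \<Longrightarrow> R\<^sup>+ \<subseteq> T"
  by (metis trancl_id trancl_mono_subset)

lemma trans_upper_pairs: "trans (upper_pairs n)"
  unfolding trans_def upper_pairs_def by auto

lemma mem_inv_set: "(i, k) \<in> inv_set n w \<longleftrightarrow> 1 \<le> i \<and> i < k \<and> k \<le> n \<and> w k < w i"
  by (simp add: inv_set_def)

lemma inv_set_subset_upper_pairs: "inv_set n w \<subseteq> upper_pairs n"
  by (auto simp: inv_set_def upper_pairs_def)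

lemma trans_inv_set: "trans (inv_set n w)"
  unfolding trans_def inv_set_def by auto

lemma cotrans_inv_set: "cotrans (inv_set n w)"
  unfolding cotrans_def inv_set_def by auto

lemma biclosed_inv_set: "biclosed n (inv_set n w)"
  by (simp add: biclosed_def inv_set_subset_upper_pairs trans_inv_set cotrans_inv_set)

lemma perms_in_range: "w \<in> perms n \<Longrightarrow> i \<in> {1..n} \<Longrightarrow> w i \<in> {1..n}"
  unfolding perms_def using permutes_in_image[of w "{1..n}" i] by simp

lemma perms_fixed_outside: "w \<in> perms n \<Longrightarrow> i \<notin> {1..n} \<Longrightarrow> w i = i"
  unfolding perms_def by (simp add: permutes_not_in)

lemma perms_eq_iff: "w \<in> perms n \<Longrightarrow> w i = w j \<longleftrightarrow> i = j"
  unfolding perms_def using permutes_inj[of w "{1..n}"] by (simp add: inj_eq)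

lemma card_perms_less:
  assumes w: "w \<in> perms n" and i: "i \<in> {1..n}"
  shows "card {j \<in> {1..n}. w j < w i} = w i - 1"
proof -
  have "w ` {j \<in> {1..n}. w j < w i} = {1..<w i}"
  proof
    show "w ` {j \<in> {1..n}. w j < w i} \<subseteq> {1..<w i}"
      using perms_in_range[OF w] by fastforce
    have "{1..<w i} \<subseteq> w ` {1..n}"
      using w perms_in_range[OF w i] permutes_image[of w "{1..n}"] by (auto simp: perms_def)
    then show "{1..<w i} \<subseteq> w ` {j \<in> {1..n}. w j < w i}" by fastforce
  qed
  moreover have "inj_on w {j \<in> {1..n}. w j < w i}"
    using w by (auto simp: perms_def intro: inj_on_subset permutes_inj_on)
  ultimately show ?thesis by (metis card_atLeastLessThan card_image)
qed

text \<open>For \<open>T = inv_set n w\<close>, \<open>inv_less T i j\<close> means \<open>w i < w j\<close>; counting the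
  positions below \<open>i\<close> in this order recovers \<open>w i\<close>.\<close>

definition inv_less :: "(nat \<times> nat) set \<Rightarrow> nat \<Rightarrow> nat \<Rightarrow> bool" where
  "inv_less T i j \<longleftrightarrow> (i < j \<and> (i, j) \<notin> T) \<or> (j < i \<and> (j, i) \<in> T)"

lemma inv_less_inv_set:
  assumes w: "w \<in> perms n" and "i \<in> {1..n}" "j \<in> {1..n}"
  shows "inv_less (inv_set n w) i j \<longleftrightarrow> w i < w j"
  using assms perms_eq_iff[OF w, of i j] unfolding inv_less_def inv_set_def
  by (cases i j rule: linorder_cases) auto

lemma inv_less_irrefl: "\<not> inv_less T i i"
  by (simp add: inv_less_def)

lemma inv_less_total: "i \<noteq> j \<Longrightarrow> inv_less T i j \<or> inv_less T j i"
  by (auto simp: inv_less_def)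

lemma inv_less_trans:
  assumes "trans T" "cotrans T" "inv_less T a b" "inv_less T b c"
  shows "inv_less T a c"
proof -
  have tr: "(x, y) \<in> T \<Longrightarrow> (y, z) \<in> T \<Longrightarrow> (x, z) \<in> T" for x y z
    using assms(1) by (rule transD)
  have co: "(x, z) \<in> T \<Longrightarrow> x < y \<Longrightarrow> y < z \<Longrightarrow> (x, y) \<in> T \<or> (y, z) \<in> T" for x y z
    using assms(2) by (rule cotransD)
  show ?thesis
    using assms(3,4) unfolding inv_less_def
    by (cases a b rule: linorder_cases; cases b c rule: linorder_cases;
        cases a c rule: linorder_cases) (use tr co in \<open>(metis less_trans less_irrefl)+\<close>)
qed

definition perm_of_inv_set :: "nat \<Rightarrow> (nat \<times> nat) set \<Rightarrow> nat \<Rightarrow> nat" where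
  "perm_of_inv_set n T i = (if i \<in> {1..n} then Suc (card {j \<in> {1..n}. inv_less T j i}) else i)"

lemma perm_of_inv_set_less:
  assumes T: "biclosed n T" and i: "i \<in> {1..n}" and j: "j \<in> {1..n}" and ij: "inv_less T i j"
  shows "perm_of_inv_set n T i < perm_of_inv_set n T j"
proof -
  have "trans T" "cotrans T" using T by (simp_all add: biclosed_def)
  then have "{k \<in> {1..n}. inv_less T k i} \<subseteq> {k \<in> {1..n}. inv_less T k j}"
    using ij inv_less_trans by blast
  moreover have "i \<in> {k \<in> {1..n}. inv_less T k j} - {k \<in> {1..n}. inv_less T k i}"
    using i ij inv_less_irrefl by blast
  ultimately have "{k \<in> {1..n}. inv_less T k i} \<subset> {k \<in> {1..n}. inv_less T k j}"
    by blast
  then show ?thesis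
    using i j by (simp add: perm_of_inv_set_def psubset_card_mono)
qed

lemma perm_of_inv_set_in_range:
  assumes i: "i \<in> {1..n}"
  shows "perm_of_inv_set n T i \<in> {1..n}"
proof -
  have "{j \<in> {1..n}. inv_less T j i} \<subseteq> {1..n} - {i}"
    using inv_less_irrefl by blast
  then have "card {j \<in> {1..n}. inv_less T j i} \<le> card ({1..n} - {i})"
    by (intro card_mono) simp_all
  also have "\<dots> < n" using i by simp
  finally have "Suc (card {j \<in> {1..n}. inv_less T j i}) \<le> n"
    by simp
  then show ?thesis using i by (simp add: perm_of_inv_set_def)
qed

lemma perm_of_inv_set_perms:
  assumes T: "biclosed n T"
  shows "perm_of_inv_set n T \<in> perms n"
proof -
  have inj: "inj_on (perm_of_inv_set n T) {1..n}"
    by (rule inj_onI) (metis inv_less_total perm_of_inv_set_less[OF T] less_irrefl)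
  moreover have "perm_of_inv_set n T ` {1..n} \<subseteq> {1..n}"
    using perm_of_inv_set_in_range by blast
  ultimately have "perm_of_inv_set n T ` {1..n} = {1..n}"
    by (intro endo_inj_surj) simp_all
  with inj have "perm_of_inv_set n T permutes {1..n}"
    by (intro bij_imp_permutes) (auto simp: bij_betw_def perm_of_inv_set_def)
  then show ?thesis by (simp add: perms_def)
qed

lemma inv_set_perm_of_inv_set:
  assumes T: "biclosed n T"
  shows "inv_set n (perm_of_inv_set n T) = T"
proof (intro set_eqI iffI)
  fix x assume "x \<in> inv_set n (perm_of_inv_set n T)"
  then obtain i j where "x = (i, j)" "1 \<le> i" "i < j" "j \<le> n"
    "perm_of_inv_set n T j < perm_of_inv_set n T i"
    by (auto simp: inv_set_def)
  then show "x \<in> T"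
    using perm_of_inv_set_less[OF T, of i j] by (auto simp: inv_less_def)
next
  fix x assume x: "x \<in> T"
  then obtain i j where ij: "x = (i, j)" "1 \<le> i" "i < j" "j \<le> n"
    using T by (auto simp: biclosed_def upper_pairs_def)
  with x have "perm_of_inv_set n T j < perm_of_inv_set n T i"
    using perm_of_inv_set_less[OF T, of j i] by (simp add: inv_less_def)
  with ij show "x \<in> inv_set n (perm_of_inv_set n T)"
    by (simp add: inv_set_def)
qed

lemma perm_of_inv_set_inv_set:
  assumes w: "w \<in> perms n"
  shows "perm_of_inv_set n (inv_set n w) = w"
proof
  fix i
  show "perm_of_inv_set n (inv_set n w) i = w i"
  proof (cases "i \<in> {1..n}")
    case True
    then have "{j \<in> {1..n}. inv_less (inv_set n w) j i} = {j \<in> {1..n}. w j < w i}"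
      using inv_less_inv_set[OF w] by auto
    with True show ?thesis
      using card_perms_less[OF w True] perms_in_range[OF w True]
      by (simp add: perm_of_inv_set_def)
  next
    case False
    then show ?thesis using perms_fixed_outside[OF w False] by (auto simp: perm_of_inv_set_def)
  qed
qed

lemma inv_set_inj:
  "u \<in> perms n \<Longrightarrow> v \<in> perms n \<Longrightarrow> inv_set n u = inv_set n v \<Longrightarrow> u = v"
  by (metis perm_of_inv_set_inv_set)

lemma biclosed_trancl:
  assumes R: "R \<subseteq> upper_pairs n"
    and split: "\<And>a b c. (a, b) \<in> R \<Longrightarrow> a < c \<Longrightarrow> c < b \<Longrightarrow> (a, c) \<in> R\<^sup>+ \<or> (c, b) \<in> R\<^sup>+"
  shows "biclosed n (R\<^sup>+)"
proof -
  have "(i, j) \<in> R\<^sup>+ \<or> (j, k) \<in> R\<^sup>+" if "(i, k) \<in> R\<^sup>+" "i < j" "j < k" for i j k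
    using that
  proof (induction arbitrary: j rule: trancl_induct)
    case (base k)
    then show ?case using split by blast
  next
    case (step y k)
    consider "j < y" | "j = y" | "y < j" by linarith
    then show ?case
    proof cases
      case 1
      then show ?thesis using step by (meson trancl.trancl_into_trancl)
    next
      case 2
      then show ?thesis using step by simp
    next
      case 3
      then show ?thesis using step split[of y k j] by (meson trancl_trans)
    qed
  qed
  moreover have "R\<^sup>+ \<subseteq> upper_pairs n"
    using R trans_upper_pairs by (rule trancl_subset_of_trans)
  ultimately show ?thesis
    by (simp add: biclosed_def cotrans_def)
qed

lemma biclosed_trancl_Union:
  assumes "\<And>T. T \<in> F \<Longrightarrow> biclosed n T"
  shows "biclosed n ((\<Union>F)\<^sup>+)"
proof (rule biclosed_trancl)
  show "\<Union>F \<subseteq> upper_pairs n" using assms by (auto simp: biclosed_def)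
  fix a b c assume "(a, b) \<in> \<Union>F" "a < c" "c < b"
  then obtain T where T: "T \<in> F" "(a, b) \<in> T" by blast
  then have "(a, c) \<in> T \<or> (c, b) \<in> T"
    using assms[OF T(1)] cotransD[of T a b c] \<open>a < c\<close> \<open>c < b\<close> by (simp add: biclosed_def)
  with T show "(a, c) \<in> (\<Union>F)\<^sup>+ \<or> (c, b) \<in> (\<Union>F)\<^sup>+" by blast
qed

section \<open>The parabolic quotient\<close>

definition cross_region :: "nat set \<Rightarrow> (nat \<times> nat) set" where
  "cross_region J = {(i, j). \<not> same_J_region J i j}"

lemma same_J_region_split:
  assumes "i \<le> j" "j \<le> k"
  shows "same_J_region J i k \<longleftrightarrow> same_J_region J i j \<and> same_J_region J j k"
proof -
  have region: "same_J_region J a b \<longleftrightarrow> (\<forall>m \<in> {a..<b}. m \<in> J)" if "a \<le> b" for a b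
    using that by (auto simp: same_J_region_def min_def max_def)
  have "{i..<k} = {i..<j} \<union> {j..<k}" using assms by auto
  then show ?thesis using assms by (simp add: region ball_Un)
qed

lemma same_J_region_Suc: "i \<in> J \<Longrightarrow> same_J_region J i (Suc i)"
  by (auto simp: same_J_region_def le_less_Suc_eq)

lemma same_J_region_SucD: "same_J_region J i (Suc i) \<Longrightarrow> i \<in> J"
  by (simp add: same_J_region_def)

lemma trans_cross_region_upper_pairs: "trans (cross_region J \<inter> upper_pairs n)"
proof (rule transI)
  fix x y z
  assume "(x, y) \<in> cross_region J \<inter> upper_pairs n" "(y, z) \<in> cross_region J \<inter> upper_pairs n"
  then show "(x, z) \<in> cross_region J \<inter> upper_pairs n"
    using same_J_region_split[of x y z J] by (auto simp: cross_region_def upper_pairs_def)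
qed

lemma parabolic_iff:
  assumes J: "J \<subseteq> {1..<n}"
  shows "w \<in> parabolic n J \<longleftrightarrow> w \<in> perms n \<and> inv_set n w \<subseteq> cross_region J"
proof
  assume w: "w \<in> parabolic n J"
  have "w i < w j" if "i < j" "same_J_region J i j" for i j
    using that
  proof (induction rule: less_Suc_induct)
    case (1 i)
    then show ?case using w by (auto simp: parabolic_def dest: same_J_region_SucD)
  next
    case (2 i j k)
    then show ?case using same_J_region_split[of i j k J] by simp
  qed
  with w show "w \<in> perms n \<and> inv_set n w \<subseteq> cross_region J"
    by (fastforce simp: parabolic_def inv_set_def cross_region_def)
next
  assume w: "w \<in> perms n \<and> inv_set n w \<subseteq> cross_region J"
  have "w i < w (Suc i)" if "i \<in> J" for i
  proof -
    have "(i, Suc i) \<notin> inv_set n w"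
      using w same_J_region_Suc[OF that] by (auto simp: cross_region_def)
    moreover have "w i \<noteq> w (Suc i)" using w perms_eq_iff[of w n i "Suc i"] by simp
    ultimately show ?thesis using that J by (auto simp: inv_set_def)
  qed
  with w show "w \<in> parabolic n J" by (simp add: parabolic_def)
qed

locale parabolic_quotient =
  fixes n :: nat and J :: "nat set"
  assumes J_subset: "J \<subseteq> {1..<n}"
begin

lemma parabolic_perms: "w \<in> parabolic n J \<Longrightarrow> w \<in> perms n"
  using parabolic_iff[OF J_subset] by blast

lemma inv_set_parabolic: "w \<in> parabolic n J \<Longrightarrow> inv_set n w \<subseteq> cross_region J \<inter> upper_pairs n"
  using parabolic_iff[OF J_subset] inv_set_subset_upper_pairs by blast

lemma perm_of_inv_set_parabolic:
  "biclosed n T \<Longrightarrow> T \<subseteq> cross_region J \<Longrightarrow> perm_of_inv_set n T \<in> parabolic n J"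
  by (simp add: parabolic_iff[OF J_subset] perm_of_inv_set_perms inv_set_perm_of_inv_set)

lemma weak_le_antisym:
  "u \<in> parabolic n J \<Longrightarrow> v \<in> parabolic n J \<Longrightarrow> weak_le n u v \<Longrightarrow> weak_le n v u \<Longrightarrow>
    u = v"
  unfolding weak_le_def by (metis inv_set_inj parabolic_perms subset_antisym)

definition parabolic_join :: "(nat \<Rightarrow> nat) \<Rightarrow> (nat \<Rightarrow> nat) \<Rightarrow> nat \<Rightarrow> nat" where
  "parabolic_join x y = perm_of_inv_set n ((inv_set n x \<union> inv_set n y)\<^sup>+)"

lemma biclosed_trancl_inv_set_Un: "biclosed n ((inv_set n x \<union> inv_set n y)\<^sup>+)"
proof -
  have "biclosed n ((\<Union>{inv_set n x, inv_set n y})\<^sup>+)"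
    by (rule biclosed_trancl_Union) (auto simp: biclosed_inv_set)
  then show ?thesis by simp
qed

lemma inv_set_parabolic_join:
  "inv_set n (parabolic_join x y) = (inv_set n x \<union> inv_set n y)\<^sup>+"
  by (simp add: parabolic_join_def inv_set_perm_of_inv_set biclosed_trancl_inv_set_Un)

lemma parabolic_join_closed:
  assumes "x \<in> parabolic n J" "y \<in> parabolic n J"
  shows "parabolic_join x y \<in> parabolic n J"
proof -
  have "inv_set n x \<union> inv_set n y \<subseteq> cross_region J \<inter> upper_pairs n"
    using assms inv_set_parabolic by blast
  then have "(inv_set n x \<union> inv_set n y)\<^sup>+ \<subseteq> cross_region J \<inter> upper_pairs n"
    using trans_cross_region_upper_pairs by (rule trancl_subset_of_trans)
  then show ?thesis
    unfolding parabolic_join_def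
    by (auto intro: perm_of_inv_set_parabolic biclosed_trancl_inv_set_Un)
qed

lemma is_join_parabolic_join:
  assumes "x \<in> parabolic n J" "y \<in> parabolic n J"
  shows "is_join (parabolic n J) (weak_le n) x y (parabolic_join x y)"
  using parabolic_join_closed[OF assms] trancl_subset_of_trans[OF _ trans_inv_set]
  by (auto simp: is_join_def weak_le_def inv_set_parabolic_join)

lemma join_on_parabolic:
  "x \<in> parabolic n J \<Longrightarrow> y \<in> parabolic n J \<Longrightarrow>
    join_on (parabolic n J) (weak_le n) x y = parabolic_join x y"
  by (rule join_on_eqI[OF weak_le_antisym is_join_parabolic_join])

text \<open>Intersections of inversion sets need not be cotransitive, so the meet is built
  from all common lower bounds.\<close>

lemma ex_is_meet_parabolic:
  assumes x: "x \<in> parabolic n J" and y: "y \<in> parabolic n J"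
  shows "\<exists>z. is_meet (parabolic n J) (weak_le n) x y z"
proof -
  let ?U = "\<Union>{inv_set n u | u. u \<in> parabolic n J \<and> weak_le n u x \<and> weak_le n u y}"
  have T: "biclosed n (?U\<^sup>+)"
    by (rule biclosed_trancl_Union) (auto simp: biclosed_inv_set)
  have "?U \<subseteq> inv_set n x" "?U \<subseteq> inv_set n y"
    by (auto simp: weak_le_def)
  then have below: "?U\<^sup>+ \<subseteq> inv_set n x" "?U\<^sup>+ \<subseteq> inv_set n y"
    by (simp_all add: trancl_subset_of_trans trans_inv_set)
  define m where "m = perm_of_inv_set n (?U\<^sup>+)"
  have inv_m: "inv_set n m = ?U\<^sup>+"
    using T by (simp add: m_def inv_set_perm_of_inv_set)
  have "m \<in> parabolic n J"
    using perm_of_inv_set_parabolic[OF T] below inv_set_parabolic[OF x] by (auto simp: m_def)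
  moreover have "weak_le n u m" if "u \<in> parabolic n J" "weak_le n u x" "weak_le n u y" for u
  proof -
    have "inv_set n u \<subseteq> ?U" using that by blast
    then show ?thesis unfolding weak_le_def inv_m by auto
  qed
  ultimately have "is_meet (parabolic n J) (weak_le n) x y m"
    using below by (simp add: is_meet_def weak_le_def inv_m)
  then show ?thesis by blast
qed

lemma lattice_parabolic: "is_lattice_on (parabolic n J) (weak_le n)"
  unfolding is_lattice_on_def
proof (intro conjI ballI impI)
  fix x y z assume xyz: "x \<in> parabolic n J" "y \<in> parabolic n J" "z \<in> parabolic n J"
  show "weak_le n x x" by (simp add: weak_le_def)
  show "weak_le n x y \<and> weak_le n y x \<Longrightarrow> x = y" using weak_le_antisym xyz by blast
  show "weak_le n x y \<and> weak_le n y z \<Longrightarrow> weak_le n x z" by (auto simp: weak_le_def)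
  show "\<exists>z. is_join (parabolic n J) (weak_le n) x y z" using is_join_parabolic_join xyz by blast
  show "\<exists>z. is_meet (parabolic n J) (weak_le n) x y z" using ex_is_meet_parabolic xyz by blast
qed

end

section \<open>The projection onto (J,231)-avoiding elements\<close>

definition between_regions :: "nat set \<Rightarrow> nat \<Rightarrow> nat \<Rightarrow> nat set" where
  "between_regions J i k =
     {j. i < j \<and> j < k \<and> \<not> same_J_region J i j \<and> \<not> same_J_region J j k}"

definition guarded :: "nat set \<Rightarrow> (nat \<times> nat) set \<Rightarrow> (nat \<times> nat) set" where
  "guarded J T = {(i, k) \<in> T. \<forall>j \<in> between_regions J i k. (i, j) \<in> T}"

lemma finite_between_regions: "finite (between_regions J i k)"
  by (rule finite_subset[of _ "{..<k}"]) (auto simp: between_regions_def)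

lemma between_regions_right:
  "j \<in> between_regions J i k \<Longrightarrow> j' \<in> between_regions J j k \<Longrightarrow> j' \<in> between_regions J i k"
  using same_J_region_split[of i j j' J] by (auto simp: between_regions_def)

lemma between_regions_left:
  "j \<in> between_regions J i k \<Longrightarrow> j' \<in> between_regions J i j \<Longrightarrow> j' \<in> between_regions J i k"
  using same_J_region_split[of j' j k J] by (auto simp: between_regions_def)

lemma guarded_subset: "guarded J T \<subseteq> T"
  by (auto simp: guarded_def)

lemma guarded_mono: "T \<subseteq> T' \<Longrightarrow> guarded J T \<subseteq> guarded J T'"
  by (auto simp: guarded_def)

lemma guarded_left:
  assumes "(i, k) \<in> guarded J T" "j \<in> between_regions J i k"
  shows "(i, j) \<in> guarded J T"
  using assms between_regions_left by (fastforce simp: guarded_def)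

lemma guarded_right_of_max:
  assumes T: "cotrans T" and ik: "(i, k) \<in> T" and j: "i < j" "j < k" and ij: "(i, j) \<notin> T"
    and max: "\<And>j'. j' \<in> between_regions J j k \<Longrightarrow> (i, j') \<in> T"
  shows "(j, k) \<in> guarded J T"
proof -
  have "(j, k) \<in> T" using cotransD[OF T ik j] ij by blast
  moreover have "(j, j') \<in> T" if "j' \<in> between_regions J j k" for j'
    using cotransD[OF T max[OF that], of j] j ij that by (auto simp: between_regions_def)
  ultimately show ?thesis by (simp add: guarded_def)
qed

lemma not_guarded_split:
  assumes T: "cotrans T" and ik: "(i, k) \<in> T" and "(i, k) \<notin> guarded J T"
  obtains j where "j \<in> between_regions J i k" "(i, j) \<notin> T" "(j, k) \<in> guarded J T"
proof -
  let ?Q = "{j \<in> between_regions J i k. (i, j) \<notin> T}"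
  have fin: "finite ?Q" and "?Q \<noteq> {}"
    using assms finite_between_regions by (auto simp: guarded_def)
  then have j: "Max ?Q \<in> ?Q" by (rule Max_in)
  have max: "\<And>j'. j' \<in> ?Q \<Longrightarrow> j' \<le> Max ?Q" using fin by simp
  have "(Max ?Q, k) \<in> guarded J T"
  proof (rule guarded_right_of_max[OF T ik])
    fix j' assume j': "j' \<in> between_regions J (Max ?Q) k"
    then have "j' \<in> between_regions J i k"
      using j between_regions_right by blast
    moreover have "Max ?Q < j'" using j' by (simp add: between_regions_def)
    then have "j' \<notin> ?Q" using max by (meson leD)
    ultimately show "(i, j') \<in> T" by blast
  qed (use j in \<open>auto simp: between_regions_def\<close>)
  with j that show thesis by blast
qed

lemma guarded_factor:
  assumes T: "cotrans T" and ik: "(i, k) \<in> guarded J T"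
    and j: "j \<in> between_regions J i k" and jk: "(j, k) \<in> T"
  obtains m where "m \<in> between_regions J i k" "(i, m) \<in> guarded J T" "(m, k) \<in> guarded J T"
proof -
  let ?Q = "{j \<in> between_regions J i k. (j, k) \<in> T}"
  have fin: "finite ?Q" and "?Q \<noteq> {}"
    using j jk finite_between_regions by auto
  then have m: "Max ?Q \<in> ?Q" by (rule Max_in)
  have max: "\<And>j'. j' \<in> ?Q \<Longrightarrow> j' \<le> Max ?Q" using fin by simp
  have "(Max ?Q, j') \<in> T" if j': "j' \<in> between_regions J (Max ?Q) k" for j'
  proof -
    have "j' \<in> between_regions J i k"
      using m j' between_regions_right by blast
    moreover have "Max ?Q < j'" using j' by (simp add: between_regions_def)
    then have "j' \<notin> ?Q" using max by (meson leD)
    ultimately have "(j', k) \<notin> T" by blast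
    then show ?thesis
      using cotransD[OF T, of "Max ?Q" k j'] m j' by (auto simp: between_regions_def)
  qed
  then have "(Max ?Q, k) \<in> guarded J T"
    using m by (simp add: guarded_def)
  moreover have "(i, Max ?Q) \<in> guarded J T"
    using guarded_left[OF ik] m by blast
  ultimately show thesis using m that by blast
qed

lemma trancl_cross_region_direct:
  assumes R: "R \<subseteq> cross_region J \<inter> upper_pairs n" and ik: "(i, k) \<in> R\<^sup>+"
    and direct: "\<And>j. j \<in> between_regions J i k \<Longrightarrow> (j, k) \<notin> R\<^sup>+"
  shows "(i, k) \<in> R"
  using ik
proof (rule converse_tranclE)
  fix c assume c: "(i, c) \<in> R" "(c, k) \<in> R\<^sup>+"
  have "R\<^sup>+ \<subseteq> cross_region J \<inter> upper_pairs n"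
    using R trans_cross_region_upper_pairs by (rule trancl_subset_of_trans)
  with c R have "c \<in> between_regions J i k"
    by (auto simp: between_regions_def cross_region_def upper_pairs_def)
  with c direct show ?thesis by blast
qed

lemma biclosed_trancl_guarded:
  assumes T: "biclosed n T" and cross: "T \<subseteq> cross_region J"
  shows "biclosed n ((guarded J T)\<^sup>+)"
proof (rule biclosed_trancl)
  show "guarded J T \<subseteq> upper_pairs n"
    using T guarded_subset by (auto simp: biclosed_def)
  have cot: "cotrans T" using T by (simp add: biclosed_def)
  fix i k j assume ik: "(i, k) \<in> guarded J T" and j: "i < j" "j < k"
  then have ikT: "(i, k) \<in> T" using guarded_subset by blast
  consider "j \<in> between_regions J i k" | "same_J_region J i j" | "same_J_region J j k"
    unfolding between_regions_def using j by blast
  then show "(i, j) \<in> (guarded J T)\<^sup>+ \<or> (j, k) \<in> (guarded J T)\<^sup>+"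
  proof cases
    case 1
    then show ?thesis using guarded_left[OF ik] by blast
  next
    case 2
    then have "(i, j) \<notin> T" using cross by (auto simp: cross_region_def)
    moreover have "j' \<in> between_regions J i k" if "j' \<in> between_regions J j k" for j'
      using that 2 same_J_region_split[of i j j' J] j by (auto simp: between_regions_def)
    ultimately have "(j, k) \<in> guarded J T"
      using guarded_right_of_max[OF cot ikT j] ik by (auto simp: guarded_def)
    then show ?thesis by blast
  next
    case 3
    then have "(j, k) \<notin> T" using cross by (auto simp: cross_region_def)
    then have "(i, j) \<in> T" using cotransD[OF cot ikT j] by blast
    moreover have "j' \<in> between_regions J i k" if "j' \<in> between_regions J i j" for j'
      using that 3 same_J_region_split[of j' j k J] j by (auto simp: between_regions_def)
    ultimately have "(i, j) \<in> guarded J T"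
      using ik by (auto simp: guarded_def)
    then show ?thesis by blast
  qed
qed

lemma perms_adjacent_values_outside:
  assumes w: "w \<in> perms n" and ik: "i < k" "k \<le> n" and wik: "w k < w i"
    and gap: "\<And>a. i < a \<Longrightarrow> a < k \<Longrightarrow> \<not> (w k < w a \<and> w a < w i)"
  obtains q p where "1 \<le> q" "q \<le> i" "k \<le> p" "p \<le> n" "w q = Suc (w p)" "w q \<le> w i"
proof -
  let ?S = "{p. k \<le> p \<and> p \<le> n \<and> w p < w i}"
  have "\<exists>p. p \<in> ?S \<and> (\<forall>p'. p' \<in> ?S \<longrightarrow> w p' \<le> w p)"
    by (rule ex_has_greatest_nat[where k = k and b = "w i"]) (use ik wik in auto)
  then obtain p where p: "p \<in> ?S" and pmax: "\<And>p'. p' \<in> ?S \<Longrightarrow> w p' \<le> w p"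
    by blast
  have "i \<in> {1..n}"
    using ik wik perms_fixed_outside[OF w, of i] by (cases "i = 0") auto
  then have "Suc (w p) \<in> {1..n}"
    using p perms_in_range[OF w] by fastforce
  also have "{1..n} = w ` {1..n}"
    using w by (simp add: perms_def permutes_image)
  finally obtain q where q: "q \<in> {1..n}" "w q = Suc (w p)"
    by (metis imageE)
  have "q \<le> i"
  proof (rule ccontr)
    assume "\<not> q \<le> i"
    then have "w q \<noteq> w i" using perms_eq_iff[OF w, of q i] by simp
    with p q have "w q < w i" by simp
    moreover have "w k \<le> w p" using pmax ik wik by simp
    ultimately show False
      using \<open>\<not> q \<le> i\<close> q p pmax[of q] gap[of q] by (cases "q < k") auto
  qed
  with p q that show thesis by auto
qed

lemma J231_not_in_trancl_guarded:
  assumes ij: "i < j" and jk: "j < k" and "\<not> same_J_region J i j" "\<not> same_J_region J j k"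
    and "w j > w i" "w i = Suc (w k)"
  shows "(i, k) \<notin> (guarded J (inv_set n w))\<^sup>+"
proof
  assume "(i, k) \<in> (guarded J (inv_set n w))\<^sup>+"
  then show False
  proof (rule converse_tranclE)
    assume "(i, k) \<in> guarded J (inv_set n w)"
    with assms have "(i, j) \<in> inv_set n w"
      by (auto simp: guarded_def between_regions_def)
    with assms show False by (simp add: mem_inv_set)
  next
    fix c assume "(i, c) \<in> guarded J (inv_set n w)" "(c, k) \<in> (guarded J (inv_set n w))\<^sup>+"
    then have "(i, c) \<in> inv_set n w" "(c, k) \<in> inv_set n w"
      using guarded_subset trancl_subset_of_trans[OF guarded_subset trans_inv_set] by blast+
    with assms show False by (simp add: mem_inv_set)
  qed
qed

lemma inv_set_subset_trancl_guarded:
  assumes w: "w \<in> perms n" and avoid: "\<not> has_J231 n J w"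
  shows "inv_set n w \<subseteq> (guarded J (inv_set n w))\<^sup>+"
proof -
  let ?T = "inv_set n w"
  have "(i, k) \<in> (guarded J ?T)\<^sup>+" if "(i, k) \<in> ?T" for i k
    using that
  proof (induction "k - i" arbitrary: i k rule: less_induct)
    case less
    then have ik: "1 \<le> i" "i < k" "k \<le> n" "w k < w i" by (simp_all add: mem_inv_set)
    consider "(i, k) \<in> guarded J ?T"
      | a where "i < a" "a < k" "w k < w a" "w a < w i"
      | "(i, k) \<notin> guarded J ?T" "\<And>a. i < a \<Longrightarrow> a < k \<Longrightarrow> \<not> (w k < w a \<and> w a < w i)"
      by blast
    then show ?case
    proof cases
      case 1
      then show ?thesis by blast
    next
      case (2 a)
      with ik have "(i, a) \<in> ?T" "(a, k) \<in> ?T" by (simp_all add: mem_inv_set)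
      with 2 less.hyps have "(i, a) \<in> (guarded J ?T)\<^sup>+" "(a, k) \<in> (guarded J ?T)\<^sup>+"
        by simp_all
      then show ?thesis by (rule trancl_trans)
    next
      case 3
      then obtain j where j: "j \<in> between_regions J i k" "(i, j) \<notin> ?T"
        using less.prems by (auto simp: guarded_def)
      then have "w i < w j"
        using ik perms_eq_iff[OF w, of i j] by (auto simp: mem_inv_set between_regions_def)
      obtain q p where qp: "1 \<le> q" "q \<le> i" "k \<le> p" "p \<le> n" "w q = Suc (w p)" "w q \<le> w i"
        using perms_adjacent_values_outside[OF w ik(2,3,4) 3(2)] by metis
      have "has_J231 n J w"
        unfolding has_J231_def
      proof (intro exI conjI)
        show "\<not> same_J_region J q j" "\<not> same_J_region J j p" "\<not> same_J_region J q p"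
          using j qp ik same_J_region_split[of q i j J] same_J_region_split[of j k p J]
            same_J_region_split[of q j p J]
          by (auto simp: between_regions_def)
      qed (use j qp \<open>w i < w j\<close> in \<open>auto simp: between_regions_def\<close>)
      with avoid show ?thesis by blast
    qed
  qed
  then show ?thesis by auto
qed

context parabolic_quotient
begin

definition pi_down :: "(nat \<Rightarrow> nat) \<Rightarrow> nat \<Rightarrow> nat" where
  "pi_down w = perm_of_inv_set n ((guarded J (inv_set n w))\<^sup>+)"

lemma biclosed_trancl_guarded_inv_set:
  "w \<in> parabolic n J \<Longrightarrow> biclosed n ((guarded J (inv_set n w))\<^sup>+)"
  using biclosed_trancl_guarded[OF biclosed_inv_set] inv_set_parabolic by blast

lemma trancl_guarded_inv_set_subset: "(guarded J (inv_set n w))\<^sup>+ \<subseteq> inv_set n w"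
  by (rule trancl_subset_of_trans[OF guarded_subset trans_inv_set])

lemma inv_set_pi_down:
  "w \<in> parabolic n J \<Longrightarrow> inv_set n (pi_down w) = (guarded J (inv_set n w))\<^sup>+"
  by (simp add: pi_down_def inv_set_perm_of_inv_set biclosed_trancl_guarded_inv_set)

lemma pi_down_parabolic: "w \<in> parabolic n J \<Longrightarrow> pi_down w \<in> parabolic n J"
  unfolding pi_down_def
  using perm_of_inv_set_parabolic biclosed_trancl_guarded_inv_set
    trancl_guarded_inv_set_subset inv_set_parabolic by (meson le_inf_iff order_trans)

lemma pi_down_le: "w \<in> parabolic n J \<Longrightarrow> weak_le n (pi_down w) w"
  by (simp add: weak_le_def inv_set_pi_down trancl_guarded_inv_set_subset)

lemma pi_down_mono:
  "u \<in> parabolic n J \<Longrightarrow> v \<in> parabolic n J \<Longrightarrow> weak_le n u v \<Longrightarrow>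
    weak_le n (pi_down u) (pi_down v)"
  by (simp add: weak_le_def inv_set_pi_down guarded_mono trancl_mono_subset)

lemma pi_down_idem:
  assumes w: "w \<in> parabolic n J"
  shows "pi_down (pi_down w) = pi_down w"
proof -
  let ?G = "guarded J (inv_set n w)"
  have "?G \<subseteq> guarded J (?G\<^sup>+)"
  proof
    fix x assume x: "x \<in> ?G"
    then obtain i k where "x = (i, k)" "(i, k) \<in> ?G" by (cases x) simp
    with guarded_left[of i k J "inv_set n w"] show "x \<in> guarded J (?G\<^sup>+)"
      by (auto simp: guarded_def[of J "?G\<^sup>+"])
  qed
  then have "?G\<^sup>+ \<subseteq> (guarded J (?G\<^sup>+))\<^sup>+"
    by (rule trancl_mono_subset)
  moreover have "(guarded J (?G\<^sup>+))\<^sup>+ \<subseteq> ?G\<^sup>+"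
    by (rule trancl_subset_of_trans[OF guarded_subset trans_trancl])
  ultimately have "inv_set n (pi_down (pi_down w)) = inv_set n (pi_down w)"
    using w by (simp add: inv_set_pi_down pi_down_parabolic)
  then show ?thesis
    using w by (meson inv_set_inj parabolic_perms pi_down_parabolic)
qed

text \<open>By induction on \<open>k - i\<close>: a guarded inversion \<open>(i, k)\<close> of the join either factors
  through a third-region position into two shorter guarded inversions, or it is already an
  inversion of \<open>x\<close> or of \<open>z\<close>; in the first case of \<open>x\<close>, if it is not guarded there, it
  factors through a guarded inversion of \<open>x\<close> and a shorter guarded inversion of the join.\<close>

lemma guarded_inv_set_join_subset:
  assumes x: "x \<in> parabolic n J" and z: "z \<in> parabolic n J"
  shows "guarded J (inv_set n (parabolic_join x z)) \<subseteq> inv_set n (parabolic_join (pi_down x) z)"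
proof -
  let ?X = "inv_set n x" and ?Z = "inv_set n z"
  let ?Y = "inv_set n (parabolic_join x z)" and ?W = "inv_set n (parabolic_join (pi_down x) z)"
  have Y: "?Y = (?X \<union> ?Z)\<^sup>+" by (rule inv_set_parabolic_join)
  have W: "?W = ((guarded J ?X)\<^sup>+ \<union> ?Z)\<^sup>+"
    using x by (simp add: inv_set_parabolic_join inv_set_pi_down)
  have XZ: "?X \<union> ?Z \<subseteq> cross_region J \<inter> upper_pairs n"
    using x z inv_set_parabolic by blast
  have "(i, k) \<in> ?W" if "(i, k) \<in> guarded J ?Y" for i k
    using that
  proof (induction "k - i" arbitrary: i k rule: less_induct)
    case less
    show ?case
    proof (cases "\<exists>j \<in> between_regions J i k. (j, k) \<in> ?Y")
      case True
      then obtain j where j: "j \<in> between_regions J i k"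
        and "(i, j) \<in> guarded J ?Y" "(j, k) \<in> guarded J ?Y"
        using guarded_factor[OF cotrans_inv_set less.prems] by blast
      with less.hyps have "(i, j) \<in> ?W" "(j, k) \<in> ?W"
        by (auto simp: between_regions_def)
      then show ?thesis by (metis W trancl_trans)
    next
      case False
      then have "(i, k) \<in> ?X \<union> ?Z"
        using trancl_cross_region_direct[OF XZ] less.prems guarded_subset Y by blast
      moreover have "(i, k) \<in> ?W" if ik: "(i, k) \<in> ?X" "(i, k) \<notin> guarded J ?X"
      proof -
        obtain j where j: "j \<in> between_regions J i k" and "(j, k) \<in> guarded J ?X"
          using not_guarded_split[OF cotrans_inv_set ik] by blast
        then have "(j, k) \<in> ?W" using W by blast
        moreover have "(i, j) \<in> ?W"
          using less.hyps guarded_left[OF less.prems j] j by (auto simp: between_regions_def)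
        ultimately show ?thesis by (metis W trancl_trans)
      qed
      ultimately show ?thesis using W by blast
    qed
  qed
  then show ?thesis by auto
qed

lemma pi_down_join_le:
  assumes x: "x \<in> parabolic n J" and z: "z \<in> parabolic n J"
  shows "weak_le n (pi_down (join_on (parabolic n J) (weak_le n) x z))
                   (join_on (parabolic n J) (weak_le n) (pi_down x) z)"
  using guarded_inv_set_join_subset[OF x z] x z
  by (simp add: weak_le_def join_on_parabolic pi_down_parabolic parabolic_join_closed
      inv_set_pi_down trancl_subset_of_trans trans_inv_set)

lemma pi_down_eq_iff:
  assumes w: "w \<in> parabolic n J"
  shows "pi_down w = w \<longleftrightarrow> \<not> has_J231 n J w"
proof
  assume fixed: "pi_down w = w"
  show "\<not> has_J231 n J w"
  proof
    assume "has_J231 n J w"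
    then obtain i j k where ijk: "1 \<le> i" "i < j" "j < k" "k \<le> n"
      "\<not> same_J_region J i j" "\<not> same_J_region J j k" "w i < w j" "w i = Suc (w k)"
      unfolding has_J231_def by auto
    then have "(i, k) \<in> inv_set n w" by (simp add: mem_inv_set)
    moreover have "(i, k) \<notin> inv_set n (pi_down w)"
      using J231_not_in_trancl_guarded[OF ijk(2,3,5-8)] inv_set_pi_down[OF w] by simp
    ultimately show False using fixed by simp
  qed
next
  assume "\<not> has_J231 n J w"
  then have "inv_set n (pi_down w) = inv_set n w"
    using w inv_set_subset_trancl_guarded parabolic_perms trancl_guarded_inv_set_subset
    by (simp add: inv_set_pi_down subset_antisym)
  then show "pi_down w = w"
    using w by (meson inv_set_inj parabolic_perms pi_down_parabolic)
qed

sublocale lattice_projection "parabolic n J" "weak_le n" pi_down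
  by unfold_locales
    (simp_all add: lattice_parabolic pi_down_parabolic pi_down_le pi_down_mono pi_down_idem
      pi_down_join_le)

lemma avoid231_eq_fixed_points: "avoid231 n J = fixed_points"
  using pi_down_eq_iff by (auto simp: avoid231_def fixed_points_def)

end

theorem theorem1p1:
  fixes n :: nat and J :: "nat set"
  assumes "n > 0" and "J \<subseteq> {1..<n}"
  shows "is_lattice_on (parabolic n J) (weak_le n)
       \<and> is_lattice_on (avoid231 n J) (weak_le n)
       \<and> (\<exists>\<Theta>. lattice_congruence (parabolic n J) (weak_le n) \<Theta>
              \<and> quotient_iso (parabolic n J) (weak_le n) \<Theta> (avoid231 n J) (weak_le n))"
proof -
  interpret parabolic_quotient n J
    using assms(2) by unfold_locales
  show ?thesis
    using lattice_parabolic lattice_fixed_points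
      lattice_congruence_proj_kernel quotient_iso_proj_kernel
    by (auto simp: avoid231_eq_fixed_points)
qed

end
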